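(* Let $K\ge 1$ and, for $k=1,\dots,K$, let $a_k>0$, $b_k>0$, $P_{L,k}>0$, and $\bar{\gamma}>0$. Let $Z_1,\dots,Z_K$ be independent, with $Z_k$ gamma distributed with shape $a_k$ and scale $b_k$ (the moment-matched gamma approximation described in the context), and set $\gamma_k=\frac{\bar{\gamma}}{P_{L,k}}Z_k^2$ and $\gamma^*=\max_{1\le k\le K}\gamma_k$. Then for $\gamma\ge 0$ the CDF of $\gamma^*$ is $$F_{\gamma^*}(\gamma)=\sum_{n_1=0}^{\infty}\cdots\sum_{n_K=0}^{\infty}\prod_{k=1}^{K}\frac{(-1)^{n_k}\left(\sqrt{\frac{P_{L,k}}{\bar{\gamma}b_k^2}}\right)^{a_k+n_k}}{n_k!\,(a_k+n_k)\,\Gamma(a_k)}\;\gamma^{\frac{\sum_{k=1}^{K}(a_k+n_k)}{2}},$$ and for $\gamma>0$ the PDF of $\gamma^*$ is $$f_{\gamma^*}(\gamma)=\sum_{j=1}^{K}\frac{\left(\frac{P_{L,j}}{\bar{\gamma}}\gamma\right)^{\frac{a_j-1}{2}}\exp\left(-\sqrt{\frac{P_{L,j}}{\bar{\gamma}b_j^2}\gamma}\right)}{2b_j^{a_j}\Gamma(a_j)\sqrt{\frac{\bar{\gamma}}{P_{L,j}}\gamma}}\;\sum_{(n_k)_{k\ne j}\in\mathbb{Z}_{\ge0}^{K-1}}\;\prod_{k\ne j}\frac{(-1)^{n_k}\left(\sqrt{\frac{P_{L,k}}{\bar{\gamma}b_k^2}}\right)^{a_k+n_k}}{n_k!\,(a_k+n_k)\,\Gamma(a_k)}\;\gamma^{\frac{\sum_{k\ne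 j}(a_k+n_k)}{2}}.$$
   Context: Model: there are $K$ reflecting surfaces; surface $k$ has $N_k$ elements with mutually independent amplitudes $\alpha_k^{(i)}$ (Nakagami-$m$, shape $m_{k,1}$, spread $\Omega_{k,1}$) and $\beta_k^{(i)}$ (Nakagami-$m$, shape $m_{k,2}$, spread $\Omega_{k,2}$), and $a_k=N_k\mu_k^2/\sigma_k^2$, $b_k=\sigma_k^2/\mu_k$, where $\mu_k$ and $\sigma_k^2$ are the mean and variance of $\alpha_k^{(1)}\beta_k^{(1)}$; the distribution of $\sum_{i=1}^{N_k}\alpha_k^{(i)}\beta_k^{(i)}$ is approximated by the gamma law with shape $a_k$, scale $b_k$ (density $z^{a_k-1}e^{-z/b_k}/(\Gamma(a_k)b_k^{a_k})$). $P_{L,k}$ is the path loss of path $k$, $\bar{\gamma}$ the average SNR, and $\gamma^*$ the SNR of the selected (best) surface. *)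

theory Defs
  imports "HOL-Probability.Probability"
begin

definition gamma_density :: "real \<Rightarrow> real \<Rightarrow> real \<Rightarrow> real" where
  "gamma_density a b z =
     (if 0 < z then z powr (a - 1) * exp (- z / b) / (Gamma a * b powr a) else 0)"

definition ser_coeff :: "real \<Rightarrow> real \<Rightarrow> real \<Rightarrow> real \<Rightarrow> nat \<Rightarrow> real" where
  "ser_coeff a b PL gbar n =
     (-1) ^ n * (sqrt (PL / (gbar * b\<^sup>2))) powr (a + real n)
       / (fact n * (a + real n) * Gamma a)"

end

(*
  If Z is gamma distributed with shape a and scale b, then P(|Z| <= s) = gamma(a, s/b) / Gamma(a)
  for the lower incomplete gamma function gamma(a, y) = sum_n (-1)^n y^(a+n) / (n! (a+n)), which
  is y^a times an entire power series S with a S + y S' = e^(-y), so that its derivative is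
  y^(a-1) e^(-y). As (gbar/PL) Z^2 <= g iff |Z| <= sqrt (PL g / gbar), the SNR of path k has CDF
  F_k(g) = gamma(a_k, sqrt (PL_k g / (gbar b_k^2))) / Gamma(a_k), and its series is the k-th
  factor of the multiple series in the theorem. By independence the CDF of the maximum is the
  product of the F_k, and a product of absolutely convergent series is the series over all index
  tuples. The density is the derivative of this product (product rule), which exists for g > 0;
  a continuous CDF that is differentiable off a finite set with nonnegative derivative f
  identifies the law as the one with density f.
*)
theory Submission
  imports Defs
begin

text \<open>The lower incomplete gamma function, the integral of t powr (a - 1) * exp (- t) over
  [0, y], introduced through its series; the definition is meant for a > 0 and y \<ge> 0.\<close>

definition lower_inc_Gamma_coeff :: "real \<Rightarrow> nat \<Rightarrow> real" where
  "lower_inc_Gamma_coeff a n = (-1) ^ n / (fact n * (a + real n))"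

definition lower_inc_Gamma_series :: "real \<Rightarrow> real \<Rightarrow> real" where
  "lower_inc_Gamma_series a y = (\<Sum>n. lower_inc_Gamma_coeff a n * y ^ n)"

definition lower_inc_Gamma :: "real \<Rightarrow> real \<Rightarrow> real" where
  "lower_inc_Gamma a y = y powr a * lower_inc_Gamma_series a y"

lemma summable_norm_lower_inc_Gamma_coeff:
  assumes "a > 0"
  shows "summable (\<lambda>n. norm (lower_inc_Gamma_coeff a n * y ^ n))"
proof (rule summable_comparison_test)
  show "summable (\<lambda>n. \<bar>y\<bar> ^ n / fact n / a)"
    using summable_exp_generic[of "\<bar>y\<bar>"] by (intro summable_divide) (simp add: divide_inverse mult.commute)
  show "\<exists>N. \<forall>n\<ge>N. norm (norm (lower_inc_Gamma_coeff a n * y ^ n)) \<le> \<bar>y\<bar> ^ n / fact n / a"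
  proof (intro exI allI impI)
    fix n :: nat
    have "norm (norm (lower_inc_Gamma_coeff a n * y ^ n)) = \<bar>y\<bar> ^ n / fact n / (a + real n)"
      using assms by (simp add: lower_inc_Gamma_coeff_def abs_mult power_abs)
    also have "\<dots> \<le> \<bar>y\<bar> ^ n / fact n / a"
      using assms by (intro divide_left_mono) auto
    finally show "norm (norm (lower_inc_Gamma_coeff a n * y ^ n)) \<le> \<bar>y\<bar> ^ n / fact n / a" .
  qed
qed

lemma lower_inc_Gamma_series_has_real_derivative:
  assumes "a > 0"
  shows "(lower_inc_Gamma_series a has_real_derivative
           (\<Sum>n. diffs (lower_inc_Gamma_coeff a) n * y ^ n)) (at y)"
  unfolding lower_inc_Gamma_series_def[abs_def]
  by (rule termdiffs_strong_converges_everywhere)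
     (rule summable_norm_cancel[OF summable_norm_lower_inc_Gamma_coeff[OF assms]])

lemma lower_inc_Gamma_series_ODE:
  assumes "a > 0"
  shows "a * lower_inc_Gamma_series a y + y * (\<Sum>n. diffs (lower_inc_Gamma_coeff a) n * y ^ n)
           = exp (- y)"
proof -
  define c where "c = lower_inc_Gamma_coeff a"
  have summable: "summable (\<lambda>n. c n * x ^ n)" for x
    unfolding c_def by (rule summable_norm_cancel[OF summable_norm_lower_inc_Gamma_coeff[OF assms]])
  have "(\<lambda>n. y * (diffs c n * y ^ n)) sums (y * (\<Sum>n. diffs c n * y ^ n))"
    by (intro sums_mult summable_sums termdiff_converges_all summable)
  moreover have "y * (diffs c n * y ^ n) = real (Suc n) * (c (Suc n) * y ^ Suc n)" for n
    by (simp add: diffs_def)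
  ultimately have "(\<lambda>n. real n * (c n * y ^ n)) sums (y * (\<Sum>n. diffs c n * y ^ n))"
    using sums_Suc_iff[of "\<lambda>n. real n * (c n * y ^ n)"] by simp
  then have "(\<lambda>n. a * (c n * y ^ n) + real n * (c n * y ^ n))
               sums (a * lower_inc_Gamma_series a y + y * (\<Sum>n. diffs c n * y ^ n))"
    unfolding lower_inc_Gamma_series_def c_def[symmetric]
    by (intro sums_add sums_mult summable_sums summable)
  moreover have "a * (c n * y ^ n) + real n * (c n * y ^ n) = (- y) ^ n /\<^sub>R fact n" for n
  proof -
    have "a * (c n * y ^ n) + real n * (c n * y ^ n) = (a + real n) * c n * y ^ n"
      by (simp add: algebra_simps)
    also have "(a + real n) * c n = (-1) ^ n / fact n"
      using assms by (simp add: c_def lower_inc_Gamma_coeff_def)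
    finally show ?thesis
      by (simp add: power_minus[of y] divide_inverse)
  qed
  ultimately have "(\<lambda>n. (- y) ^ n /\<^sub>R fact n)
                     sums (a * lower_inc_Gamma_series a y + y * (\<Sum>n. diffs c n * y ^ n))"
    by simp
  with exp_converges[of "- y"] show ?thesis
    unfolding c_def by (rule sums_unique2[symmetric])
qed

lemma lower_inc_Gamma_has_real_derivative:
  assumes "a > 0" "y > 0"
  shows "(lower_inc_Gamma a has_real_derivative y powr (a - 1) * exp (- y)) (at y)"
proof -
  define S' where "S' = (\<Sum>n. diffs (lower_inc_Gamma_coeff a) n * y ^ n)"
  have "(lower_inc_Gamma a has_real_derivative
          y powr a * S' + a * y powr (a - 1) * lower_inc_Gamma_series a y) (at y)"
    unfolding lower_inc_Gamma_def[abs_def] S'_def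
    by (rule DERIV_mult'[OF has_real_derivative_powr[OF assms(2)]
                            lower_inc_Gamma_series_has_real_derivative[OF assms(1)]])
  also have "y powr a * S' + a * y powr (a - 1) * lower_inc_Gamma_series a y
      = y powr (a - 1) * (a * lower_inc_Gamma_series a y + y * S')"
    using assms(2) by (simp add: powr_diff algebra_simps)
  finally show ?thesis
    unfolding S'_def lower_inc_Gamma_series_ODE[OF assms(1)] .
qed

lemma continuous_on_lower_inc_Gamma_series: "a > 0 \<Longrightarrow> continuous_on S (lower_inc_Gamma_series a)"
  by (meson DERIV_isCont continuous_at_imp_continuous_on lower_inc_Gamma_series_has_real_derivative)

lemma continuous_on_lower_inc_Gamma: "a > 0 \<Longrightarrow> continuous_on {0..} (lower_inc_Gamma a)"
  unfolding lower_inc_Gamma_def[abs_def]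
  by (intro continuous_intros continuous_on_powr' continuous_on_lower_inc_Gamma_series) auto

lemma borel_measurable_lower_inc_Gamma:
  assumes "a > 0"
  shows "lower_inc_Gamma a \<in> borel_measurable borel"
proof -
  have [measurable]: "lower_inc_Gamma_series a \<in> borel_measurable borel"
    by (intro borel_measurable_continuous_onI continuous_on_lower_inc_Gamma_series assms)
  show ?thesis
    unfolding lower_inc_Gamma_def[abs_def] by measurable
qed

lemma lower_inc_Gamma_has_sum:
  assumes "a > 0" "y \<ge> 0"
  shows "((\<lambda>n. (-1) ^ n * y powr (a + real n) / (fact n * (a + real n)))
           has_sum lower_inc_Gamma a y) UNIV"
proof -
  have powr_split: "(-1) ^ n * y powr (a + real n) / (fact n * (a + real n))
                = y powr a * (lower_inc_Gamma_coeff a n * y ^ n)" for n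
    using assms(2) by (cases "y = 0") (simp_all add: lower_inc_Gamma_coeff_def powr_add powr_realpow)
  have "summable (\<lambda>n. norm (y powr a) * norm (lower_inc_Gamma_coeff a n * y ^ n))"
    by (intro summable_mult summable_norm_lower_inc_Gamma_coeff assms(1))
  moreover have "(\<lambda>n. y powr a * (lower_inc_Gamma_coeff a n * y ^ n)) sums lower_inc_Gamma a y"
    unfolding lower_inc_Gamma_def lower_inc_Gamma_series_def
    by (intro sums_mult summable_sums summable_norm_cancel[OF summable_norm_lower_inc_Gamma_coeff] assms(1))
  ultimately show ?thesis
    unfolding powr_split by (intro norm_summable_imp_has_sum) (simp_all only: norm_mult)
qed

lemma gamma_density_nonneg: "a > 0 \<Longrightarrow> b > 0 \<Longrightarrow> gamma_density a b z \<ge> 0"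
  by (simp add: gamma_density_def Gamma_real_pos less_imp_le)

lemma has_integral_gamma_density:
  assumes "a > 0" "b > 0" "s \<ge> 0"
  shows "(gamma_density a b has_integral lower_inc_Gamma a (s / b) / Gamma a) {0..s}"
proof -
  define F where "F x = lower_inc_Gamma a (x / b) / Gamma a" for x
  have "(gamma_density a b has_integral F s - F 0) {0..s}"
  proof (rule fundamental_theorem_of_calculus_interior_strong[where S = "{}"])
    fix x assume "x \<in> {0<..<s} - {}"
    then have "x / b > 0"
      using assms(2) by simp
    have scale: "((\<lambda>x. x / b) has_real_derivative 1 / b) (at x)"
      using assms(2) by (auto intro!: derivative_eq_intros)
    have "(F has_real_derivative (x / b) powr (a - 1) * exp (- (x / b)) * (1 / b) / Gamma a) (at x)"
      unfolding F_def[abs_def]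
      by (rule DERIV_cdivide[OF DERIV_chain2[OF
            lower_inc_Gamma_has_real_derivative[OF assms(1) \<open>x / b > 0\<close>] scale]])
    also have "(x / b) powr (a - 1) * exp (- (x / b)) * (1 / b) / Gamma a = gamma_density a b x"
      using \<open>x / b > 0\<close> assms(2) by (simp add: gamma_density_def powr_divide powr_diff field_simps)
    finally show "(F has_vector_derivative gamma_density a b x) (at x)"
      by (simp add: has_real_derivative_iff_has_vector_derivative)
  next
    have "Gamma a \<noteq> 0"
      using Gamma_real_pos[OF assms(1)] by linarith
    then show "continuous_on {0..s} F"
      unfolding F_def[abs_def]
      by (intro continuous_on_divide continuous_on_const continuous_on_compose2[OF continuous_on_lower_inc_Gamma])
         (use assms in \<open>auto intro!: continuous_intros\<close>)
  qed (use assms in auto)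
  then show ?thesis
    by (simp add: F_def lower_inc_Gamma_def)
qed

lemma lower_inc_Gamma_nonneg:
  assumes "a > 0" "y \<ge> 0"
  shows "lower_inc_Gamma a y \<ge> 0"
proof -
  have "lower_inc_Gamma a y / Gamma a \<ge> 0"
    using has_integral_nonneg[OF has_integral_gamma_density[of a 1 y]] gamma_density_nonneg assms by auto
  then show ?thesis
    using Gamma_real_pos[OF assms(1)] by (simp add: zero_le_divide_iff)
qed

lemma (in prob_space) prob_abs_le_gamma_distributed:
  assumes "distributed M lborel X (\<lambda>z. ennreal (gamma_density a b z))" "a > 0" "b > 0" "s \<ge> 0"
  shows "prob {\<omega> \<in> space M. \<bar>X \<omega>\<bar> \<le> s} = lower_inc_Gamma a (s / b) / Gamma a"
proof -
  have X[measurable]: "X \<in> borel_measurable M"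
    and distr: "distr M lborel X = density lborel (\<lambda>z. ennreal (gamma_density a b z))"
    using assms(1) by (auto simp: distributed_def)
  have "emeasure M {\<omega> \<in> space M. \<bar>X \<omega>\<bar> \<le> s} = emeasure (distr M lborel X) {-s..s}"
    by (subst emeasure_distr) (auto intro!: arg_cong[where f = "emeasure M"])
  also have "\<dots> = (\<integral>\<^sup>+z. ennreal (gamma_density a b z) * indicator {0..s} z \<partial>lborel)"
    unfolding distr using assms(1)
    by (subst emeasure_density) (auto simp: distributed_def gamma_density_def indicator_def intro!: nn_integral_cong)
  also have "\<dots> = ennreal (lower_inc_Gamma a (s / b) / Gamma a)"
    using assms(2-4)
    by (intro nn_integral_has_integral_lebesgue' gamma_density_nonneg has_integral_gamma_density)
  finally show ?thesis
    using assms(2-4) lower_inc_Gamma_nonneg[of a "s / b"]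
    by (simp add: emeasure_eq_measure Gamma_real_pos)
qed

lemma has_sum_prod_PiE:
  fixes f :: "'a \<Rightarrow> 'b \<Rightarrow> real"
  assumes "finite A" "\<And>x. x \<in> A \<Longrightarrow> countable (B x)"
    and "\<And>x. x \<in> A \<Longrightarrow> (f x has_sum s x) (B x)"
  shows "((\<lambda>g. \<Prod>x\<in>A. f x (g x)) has_sum (\<Prod>x\<in>A. s x)) (PiE A B)"
proof -
  have abs_summable: "(\<lambda>y. norm (f x y)) summable_on B x" if "x \<in> A" for x
    using has_sum_imp_summable[OF assms(3)[OF that]] summable_on_iff_abs_summable_on_real by blast
  then have "(\<lambda>g. norm (\<Prod>x\<in>A. f x (g x))) summable_on PiE A B"
    using abs_summable_on_prod_PiE[OF assms(1,2), where f = f] by (simp add: abs_summable_equivalent[symmetric])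
  then have summable: "(\<lambda>g. \<Prod>x\<in>A. f x (g x)) summable_on PiE A B"
    by (rule abs_summable_summable)
  have "infsum (\<lambda>g. \<Prod>x\<in>A. f x (g x)) (PiE A B) = (\<Prod>x\<in>A. infsum (f x) (B x))"
    by (rule infsum_prod_PiE_abs[OF assms(1) abs_summable])
  also have "\<dots> = (\<Prod>x\<in>A. s x)"
    using assms(3) by (intro prod.cong) (auto intro: infsumI)
  finally show ?thesis
    using has_sum_infsum[OF summable] by simp
qed

text \<open>The side condition rules out 0 powr 0, which is 0 rather than 1 in Isabelle/HOL.\<close>

lemma prod_mult_powr:
  fixes c e :: "'i \<Rightarrow> real"
  assumes "finite A" "g \<noteq> 0 \<or> A \<noteq> {}"
  shows "(\<Prod>k\<in>A. c k * g powr e k) = (\<Prod>k\<in>A. c k) * g powr (\<Sum>k\<in>A. e k)"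
proof (cases "g = 0")
  case True
  with assms show ?thesis
    by (auto intro: prod_zero)
qed (simp add: prod.distrib powr_sum)

lemma (in prob_space) prob_Max_le_indep:
  fixes Y :: "'i \<Rightarrow> 'a \<Rightarrow> real"
  assumes "indep_vars (\<lambda>_. borel) Y I" "finite I" "I \<noteq> {}"
  shows "prob {\<omega> \<in> space M. Max ((\<lambda>i. Y i \<omega>) ` I) \<le> x}
           = (\<Prod>i\<in>I. prob {\<omega> \<in> space M. Y i \<omega> \<le> x})"
proof -
  have "{\<omega> \<in> space M. Max ((\<lambda>i. Y i \<omega>) ` I) \<le> x} = (\<Inter>i\<in>I. Y i -` {..x} \<inter> space M)"
    using assms(2,3) by auto
  also have "prob \<dots> = (\<Prod>i\<in>I. prob (Y i -` {..x} \<inter> space M))"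
    using assms(1) unfolding indep_vars_def2
    by (intro indep_setsD[OF _ subset_refl assms(3,2)]) (auto intro!: exI[of _ "{..x}"])
  finally show ?thesis
    by (simp add: vimage_def Int_def conj_commute)
qed

lemma (in prob_space) distributed_by_cdf:
  fixes W :: "'a \<Rightarrow> real"
  assumes [measurable]: "W \<in> borel_measurable M" "f \<in> borel_measurable borel"
    and cdf: "\<And>x. prob {\<omega> \<in> space M. W \<omega> \<le> x} = H x"
    and "continuous_on UNIV H" "finite S" "\<And>x. x \<notin> S \<Longrightarrow> (H has_real_derivative f x) (at x)"
    and "\<And>x. f x \<ge> 0"
  shows "distributed M lborel W (\<lambda>x. ennreal (f x))"
proof -
  have Ioc: "emeasure (distr M lborel W) {u<..v} = emeasure (density lborel f) {u<..v}"
    if "u \<le> v" for u v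
  proof -
    have "emeasure (distr M lborel W) {u<..v}
        = emeasure M ({\<omega> \<in> space M. W \<omega> \<le> v} - {\<omega> \<in> space M. W \<omega> \<le> u})"
      using that by (subst emeasure_distr) (auto intro!: arg_cong[where f = "emeasure M"])
    also have "\<dots> = ennreal (H v - H u)"
      unfolding emeasure_eq_measure cdf[symmetric] using that
      by (subst finite_measure_Diff) auto
    finally have distr_Ioc: "emeasure (distr M lborel W) {u<..v} = ennreal (H v - H u)" .
    have "(f has_integral H v - H u) {u..v}"
    proof (rule fundamental_theorem_of_calculus_interior_strong[OF \<open>finite S\<close> that])
      show "continuous_on {u..v} H"
        using \<open>continuous_on UNIV H\<close> by (rule continuous_on_subset) simp
    qed (use assms(6) in \<open>auto simp: has_real_derivative_iff_has_vector_derivative\<close>)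
    then have "(\<integral>\<^sup>+x. ennreal (f x) * indicator {u..v} x \<partial>lborel) = ennreal (H v - H u)"
      by (rule nn_integral_has_integral_lebesgue'[OF assms(7)])
    moreover have "emeasure (density lborel f) {u<..v}
        = (\<integral>\<^sup>+x. ennreal (f x) * indicator {u..v} x \<partial>lborel)"
      using AE_lborel_singleton[of u]
      by (subst emeasure_density) (auto intro!: nn_integral_cong_AE simp: indicator_def)
    ultimately show ?thesis
      using distr_Ioc by simp
  qed
  have "distr M lborel W = density lborel f"
  proof (rule measure_eqI_generator_eq[where \<Omega> = UNIV and E = "range (\<lambda>(u, v). {u<..v::real})"
        and A = "\<lambda>i. {- real i<..real i}"])
    fix X assume "X \<in> range (\<lambda>(u, v). {u<..v::real})"
    then obtain u v where X: "X = {u<..v}"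
      by auto
    show "emeasure (distr M lborel W) X = emeasure (density lborel f) X"
      using Ioc[of u v] by (cases "u \<le> v") (simp_all add: X)
  next
    show "emeasure (distr M lborel W) {- real i<..real i} \<noteq> \<infinity>" for i
      by (simp add: emeasure_distr emeasure_finite)
  qed (auto simp: borel_sigma_sets_Ioc Int_stable_def UN_Ioc_eq_UNIV)
  then show ?thesis
    by (simp add: distributed_def)
qed

lemma (in prob_space) distributed_nonneg_by_cdf:
  fixes W :: "'a \<Rightarrow> real"
  assumes [measurable]: "W \<in> borel_measurable M" "f \<in> borel_measurable borel"
    and nonneg: "\<And>\<omega>. \<omega> \<in> space M \<Longrightarrow> W \<omega> \<ge> 0"
    and cdf: "\<And>x. x \<ge> 0 \<Longrightarrow> prob {\<omega> \<in> space M. W \<omega> \<le> x} = G x"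
    and "continuous_on {0..} G" "G 0 = 0"
    and deriv: "\<And>x. x > 0 \<Longrightarrow> (G has_real_derivative f x) (at x)"
    and "\<And>x. x > 0 \<Longrightarrow> f x \<ge> 0"
  shows "distributed M lborel W (\<lambda>x. ennreal (if 0 < x then f x else 0))"
proof (rule distributed_by_cdf[where H = "\<lambda>x. G (max x 0)" and S = "{0}"])
  show "prob {\<omega> \<in> space M. W \<omega> \<le> x} = G (max x 0)" for x
  proof (cases "x \<ge> 0")
    case False
    then have empty: "{\<omega> \<in> space M. W \<omega> \<le> x} = {}"
      using nonneg by force
    show ?thesis
      unfolding empty using False \<open>G 0 = 0\<close> by simp
  qed (simp add: cdf)
  show "continuous_on UNIV (\<lambda>x. G (max x 0))"
    by (rule continuous_on_compose2[OF \<open>continuous_on {0..} G\<close>]) (auto intro!: continuous_intros)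
  show "((\<lambda>x. G (max x 0)) has_real_derivative (if 0 < x then f x else 0)) (at x)" if "x \<notin> {0}" for x
  proof (cases "x > 0")
    case True
    have "((\<lambda>x. G (max x 0)) has_real_derivative f x) (at x)"
      by (rule has_field_derivative_transform_within_open[OF deriv[OF True], where S = "{0<..}"])
         (use True in auto)
    with True show ?thesis
      by simp
  next
    case False
    with that have "x < 0"
      by simp
    have "((\<lambda>x. G (max x 0)) has_real_derivative 0) (at x)"
      by (rule has_field_derivative_transform_within_open[OF DERIV_const, where S = "{..<0}"])
         (use \<open>x < 0\<close> in auto)
    with \<open>x < 0\<close> show ?thesis
      by simp
  qed
  show "(\<lambda>x. if 0 < x then f x else 0) \<in> borel_measurable borel"
    by measurable
qed (use assms in auto)

lemma (in prob_space) distributed_Max_indep: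
  fixes Y :: "'i \<Rightarrow> 'a \<Rightarrow> real"
  assumes indep: "indep_vars (\<lambda>_. borel) Y I" and "finite I" "I \<noteq> {}"
    and nonneg: "\<And>i \<omega>. i \<in> I \<Longrightarrow> \<omega> \<in> space M \<Longrightarrow> Y i \<omega> \<ge> 0"
    and cdf: "\<And>i x. i \<in> I \<Longrightarrow> x \<ge> 0 \<Longrightarrow> prob {\<omega> \<in> space M. Y i \<omega> \<le> x} = F i x"
    and "\<And>i. i \<in> I \<Longrightarrow> continuous_on {0..} (F i)" "\<And>i. i \<in> I \<Longrightarrow> F i 0 = 0"
    and "\<And>i x. i \<in> I \<Longrightarrow> x > 0 \<Longrightarrow> (F i has_real_derivative f i x) (at x)"
    and "\<And>i x. i \<in> I \<Longrightarrow> x > 0 \<Longrightarrow> f i x \<ge> 0"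
    and "\<And>i. i \<in> I \<Longrightarrow> F i \<in> borel_measurable borel"
    and "\<And>i. i \<in> I \<Longrightarrow> f i \<in> borel_measurable borel"
  shows "distributed M lborel (\<lambda>\<omega>. Max ((\<lambda>i. Y i \<omega>) ` I))
           (\<lambda>x. ennreal (if 0 < x then \<Sum>j\<in>I. f j x * (\<Prod>i\<in>I - {j}. F i x) else 0))"
proof (rule distributed_nonneg_by_cdf[where G = "\<lambda>x. \<Prod>i\<in>I. F i x"])
  have F_nonneg: "F i x \<ge> 0" if "i \<in> I" "x \<ge> 0" for i x
    using cdf[OF that] by (metis measure_nonneg)
  show "(\<lambda>\<omega>. Max ((\<lambda>i. Y i \<omega>) ` I)) \<in> borel_measurable M"
    using indep \<open>finite I\<close> by (intro borel_measurable_Max) (auto simp: indep_vars_def)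
  show "Max ((\<lambda>i. Y i \<omega>) ` I) \<ge> 0" if "\<omega> \<in> space M" for \<omega>
  proof -
    obtain i where "i \<in> I"
      using \<open>I \<noteq> {}\<close> by blast
    then have "Y i \<omega> \<le> Max ((\<lambda>i. Y i \<omega>) ` I)"
      using \<open>finite I\<close> by simp
    with nonneg[OF \<open>i \<in> I\<close> that] show ?thesis
      by linarith
  qed
  show "prob {\<omega> \<in> space M. Max ((\<lambda>i. Y i \<omega>) ` I) \<le> x} = (\<Prod>i\<in>I. F i x)" if "x \<ge> 0" for x
    using prob_Max_le_indep[OF indep \<open>finite I\<close> \<open>I \<noteq> {}\<close>] cdf that by simp
  show "continuous_on {0..} (\<lambda>x. \<Prod>i\<in>I. F i x)"
    using assms(6) by (intro continuous_on_prod) auto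
  show "(\<Prod>i\<in>I. F i 0) = 0"
    using assms(7) \<open>finite I\<close> \<open>I \<noteq> {}\<close> by (auto intro: prod_zero)
  show "((\<lambda>x. \<Prod>i\<in>I. F i x) has_real_derivative (\<Sum>j\<in>I. f j x * (\<Prod>i\<in>I - {j}. F i x))) (at x)"
    if "x > 0" for x
    using assms(8) that by (intro has_field_derivative_prod) auto
  show "(\<Sum>j\<in>I. f j x * (\<Prod>i\<in>I - {j}. F i x)) \<ge> 0" if "x > 0" for x
    using assms(9) F_nonneg that by (intro sum_nonneg mult_nonneg_nonneg prod_nonneg) auto
  show "(\<lambda>x. \<Sum>j\<in>I. f j x * (\<Prod>i\<in>I - {j}. F i x)) \<in> borel_measurable borel"
    using assms(10,11) by (intro borel_measurable_sum borel_measurable_times borel_measurable_prod) auto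
qed

definition snr_cdf :: "real \<Rightarrow> real \<Rightarrow> real \<Rightarrow> real \<Rightarrow> real \<Rightarrow> real" where
  "snr_cdf a b PL gbar g = lower_inc_Gamma a (sqrt (PL / (gbar * b\<^sup>2) * g)) / Gamma a"

definition snr_pdf :: "real \<Rightarrow> real \<Rightarrow> real \<Rightarrow> real \<Rightarrow> real \<Rightarrow> real" where
  "snr_pdf a b PL gbar g =
     (PL / gbar * g) powr ((a - 1) / 2) * exp (- sqrt (PL / (gbar * b\<^sup>2) * g))
       / (2 * b powr a * Gamma a * sqrt (gbar / PL * g))"

lemma (in prob_space) prob_snr_le:
  assumes "distributed M lborel X (\<lambda>z. ennreal (gamma_density a b z))"
    and "a > 0" "b > 0" "PL > 0" "gbar > 0" "g \<ge> 0"
  shows "prob {\<omega> \<in> space M. gbar / PL * (X \<omega>)\<^sup>2 \<le> g} = snr_cdf a b PL gbar g"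
proof -
  define s where "s = sqrt (PL * g / gbar)"
  have "gbar / PL * x\<^sup>2 \<le> g \<longleftrightarrow> \<bar>x\<bar> \<le> s" for x
  proof -
    have "gbar / PL * x\<^sup>2 \<le> g \<longleftrightarrow> x\<^sup>2 \<le> PL * g / gbar"
      using assms(4,5) by (simp add: field_simps)
    also have "\<dots> \<longleftrightarrow> \<bar>x\<bar> \<le> s"
      unfolding s_def by (metis real_sqrt_abs real_sqrt_le_iff)
    finally show ?thesis .
  qed
  moreover have "s / b = sqrt (PL / (gbar * b\<^sup>2) * g)"
    using assms(3) by (simp add: s_def real_sqrt_divide real_sqrt_mult field_simps)
  ultimately show ?thesis
    using prob_abs_le_gamma_distributed[OF assms(1-3), of s] assms(4-6)
    by (simp add: snr_cdf_def s_def)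
qed

lemma snr_cdf_0 [simp]: "snr_cdf a b PL gbar 0 = 0"
  by (simp add: snr_cdf_def lower_inc_Gamma_def)

lemma continuous_on_snr_cdf:
  assumes "a > 0" "b > 0" "PL > 0" "gbar > 0"
  shows "continuous_on {0..} (snr_cdf a b PL gbar)"
proof -
  have "Gamma a \<noteq> 0"
    using Gamma_real_pos[OF assms(1)] by linarith
  then show ?thesis
    unfolding snr_cdf_def[abs_def]
    by (intro continuous_on_divide continuous_on_const continuous_on_compose2[OF continuous_on_lower_inc_Gamma])
       (use assms in \<open>auto intro!: continuous_intros\<close>)
qed

lemma borel_measurable_snr_cdf: "a > 0 \<Longrightarrow> snr_cdf a b PL gbar \<in> borel_measurable borel"
  using borel_measurable_lower_inc_Gamma[measurable] unfolding snr_cdf_def[abs_def] by measurable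

lemma snr_cdf_has_sum:
  assumes "a > 0" "b > 0" "PL > 0" "gbar > 0" "g \<ge> 0"
  shows "((\<lambda>n. ser_coeff a b PL gbar n * g powr ((a + real n) / 2)) has_sum snr_cdf a b PL gbar g) UNIV"
proof -
  define r where "r = PL / (gbar * b\<^sup>2)"
  have "sqrt r powr t * g powr (t / 2) = sqrt (r * g) powr t" for t
    using assms(5) by (simp add: real_sqrt_mult powr_mult powr_half_sqrt[symmetric] powr_powr)
  then have "ser_coeff a b PL gbar n * g powr ((a + real n) / 2)
      = (-1) ^ n * sqrt (r * g) powr (a + real n) / (fact n * (a + real n)) / Gamma a" for n
    by (simp add: ser_coeff_def r_def flip: mult.assoc)
  moreover have "r * g \<ge> 0"
    using assms by (simp add: r_def)
  ultimately show ?thesis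
    unfolding snr_cdf_def r_def[symmetric]
    using has_sum_divide_const[OF lower_inc_Gamma_has_sum[OF assms(1)]] by simp
qed

lemma snr_cdf_prod_has_sum:
  assumes "finite A" "\<And>k. k \<in> A \<Longrightarrow> a k > 0" "\<And>k. k \<in> A \<Longrightarrow> b k > 0"
    and "\<And>k. k \<in> A \<Longrightarrow> PL k > 0" "gbar > 0" "g \<ge> 0" "A \<noteq> {} \<or> g > 0"
  shows "((\<lambda>n. (\<Prod>k\<in>A. ser_coeff (a k) (b k) (PL k) gbar (n k))
                 * g powr ((\<Sum>k\<in>A. a k + real (n k)) / 2))
           has_sum (\<Prod>k\<in>A. snr_cdf (a k) (b k) (PL k) gbar g)) (PiE A (\<lambda>_. UNIV))"
proof -
  have "((\<lambda>n. \<Prod>k\<in>A. ser_coeff (a k) (b k) (PL k) gbar (n k) * g powr ((a k + real (n k)) / 2))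
          has_sum (\<Prod>k\<in>A. snr_cdf (a k) (b k) (PL k) gbar g)) (PiE A (\<lambda>_. UNIV))"
    using assms by (intro has_sum_prod_PiE snr_cdf_has_sum) auto
  moreover have "g \<noteq> 0 \<or> A \<noteq> {}"
    using assms(7) by auto
  ultimately show ?thesis
    using assms(1) by (simp add: prod_mult_powr flip: sum_divide_distrib)
qed

lemma snr_cdf_has_real_derivative:
  assumes "a > 0" "b > 0" "PL > 0" "gbar > 0" "g > 0"
  shows "(snr_cdf a b PL gbar has_real_derivative snr_pdf a b PL gbar g) (at g)"
proof -
  define r where "r = PL / (gbar * b\<^sup>2)"
  define s where "s = sqrt (PL / gbar * g)"
  have "s > 0" "r * g > 0"
    using assms by (simp_all add: s_def r_def)
  have "s\<^sup>2 = PL / gbar * g"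
    using assms by (simp add: s_def)
  then have r: "r = s\<^sup>2 / (g * b\<^sup>2)" and "(s / b)\<^sup>2 = r * g" "(g / s)\<^sup>2 = gbar / PL * g"
    using assms \<open>s > 0\<close> by (simp_all add: r_def power_divide field_simps power2_eq_square)
  then have sqrt_rg: "sqrt (r * g) = s / b" and "sqrt (gbar / PL * g) = g / s"
    using assms \<open>s > 0\<close> by (simp_all add: real_sqrt_unique)
  have "((\<lambda>g. sqrt (r * g)) has_real_derivative inverse (sqrt (r * g)) / 2 * r) (at g)"
    using \<open>r * g > 0\<close> by (auto intro!: derivative_eq_intros)
  then have "(snr_cdf a b PL gbar has_real_derivative
      sqrt (r * g) powr (a - 1) * exp (- sqrt (r * g)) * (inverse (sqrt (r * g)) / 2 * r) / Gamma a) (at g)"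
    unfolding snr_cdf_def[abs_def] r_def[symmetric] using \<open>r * g > 0\<close>
    by (intro DERIV_cdivide DERIV_chain2[OF lower_inc_Gamma_has_real_derivative[OF assms(1)]]) auto
  also have "sqrt (r * g) powr (a - 1) * exp (- sqrt (r * g)) * (inverse (sqrt (r * g)) / 2 * r) / Gamma a
      = s powr (a - 1) * exp (- (s / b)) / (2 * b powr a * Gamma a * (g / s))"
    using assms \<open>s > 0\<close> unfolding sqrt_rg
    by (simp add: r powr_divide powr_diff field_simps power2_eq_square)
  also have "\<dots> = snr_pdf a b PL gbar g"
    using assms \<open>sqrt (gbar / PL * g) = g / s\<close> sqrt_rg
    by (simp add: snr_pdf_def r_def s_def powr_half_sqrt[symmetric] powr_powr)
  finally show ?thesis .
qed

lemma snr_pdf_nonneg: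
  assumes "a > 0" "b > 0" "PL > 0" "gbar > 0" "g > 0"
  shows "snr_pdf a b PL gbar g \<ge> 0"
  using assms by (simp add: snr_pdf_def less_imp_le)

lemma borel_measurable_snr_pdf: "snr_pdf a b PL gbar \<in> borel_measurable borel"
  unfolding snr_pdf_def[abs_def] by measurable

theorem theorem2:
  fixes M :: "'a measure" and K :: nat
    and Z :: "nat \<Rightarrow> 'a \<Rightarrow> real"
    and a b PL :: "nat \<Rightarrow> real" and gbar :: real
  assumes "prob_space M"
    and "K \<ge> 1"
    and "\<And>k. k < K \<Longrightarrow> a k > 0"
    and "\<And>k. k < K \<Longrightarrow> b k > 0"
    and "\<And>k. k < K \<Longrightarrow> PL k > 0"
    and "gbar > 0"
    and "prob_space.indep_vars M (\<lambda>_. borel) Z {..<K}"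
    and "\<And>k. k < K \<Longrightarrow>
           distributed M lborel (Z k) (\<lambda>z. ennreal (gamma_density (a k) (b k) z))"
  shows
    "(\<forall>g::real. g \<ge> 0 \<longrightarrow>
        ((\<lambda>n. (\<Prod>k<K. ser_coeff (a k) (b k) (PL k) gbar (n k))
                * g powr ((\<Sum>k<K. a k + real (n k)) / 2))
         has_sum measure M {\<omega> \<in> space M.
             Max ((\<lambda>k. gbar / PL k * (Z k \<omega>)\<^sup>2) ` {..<K}) \<le> g})
        (PiE {..<K} (\<lambda>_. UNIV)))
     \<and>
     distributed M lborel
       (\<lambda>\<omega>. Max ((\<lambda>k. gbar / PL k * (Z k \<omega>)\<^sup>2) ` {..<K}))
       (\<lambda>g. ennreal (if 0 < g then
          (\<Sum>j<K.
             (PL j / gbar * g) powr ((a j - 1) / 2)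
               * exp (- sqrt (PL j / (gbar * (b j)\<^sup>2) * g))
               / (2 * b j powr a j * Gamma (a j) * sqrt (gbar / PL j * g))
             * (\<Sum>\<^sub>\<infinity>n\<in>PiE ({..<K} - {j}) (\<lambda>_. UNIV).
                  (\<Prod>k\<in>{..<K} - {j}. ser_coeff (a k) (b k) (PL k) gbar (n k))
                  * g powr ((\<Sum>k\<in>{..<K} - {j}. a k + real (n k)) / 2)))
          else 0))"
proof -
  interpret prob_space M by fact
  let ?Y = "\<lambda>k \<omega>. gbar / PL k * (Z k \<omega>)\<^sup>2"
  let ?F = "\<lambda>k. snr_cdf (a k) (b k) (PL k) gbar"
  have pos: "a k > 0" "b k > 0" "PL k > 0" if "k \<in> {..<K}" for k
    using that assms(3-5) by auto
  have nonempty: "{..<K} \<noteq> {}"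
    using assms(2) by (simp add: lessThan_empty_iff)
  have Y_nonneg: "?Y k \<omega> \<ge> 0" if "k \<in> {..<K}" for k \<omega>
    using pos[OF that] assms(6) by simp
  have indep: "indep_vars (\<lambda>_. borel) ?Y {..<K}"
    using assms(7) by (rule indep_vars_compose2) measurable
  have marginal: "prob {\<omega> \<in> space M. ?Y k \<omega> \<le> g} = ?F k g" if "k \<in> {..<K}" "g \<ge> 0" for k g
    using assms(6,8) pos that by (intro prob_snr_le) auto
  have series: "((\<lambda>n. (\<Prod>k\<in>A. ser_coeff (a k) (b k) (PL k) gbar (n k))
                      * g powr ((\<Sum>k\<in>A. a k + real (n k)) / 2))
                 has_sum (\<Prod>k\<in>A. ?F k g)) (PiE A (\<lambda>_. UNIV))"
    if "A \<subseteq> {..<K}" "g \<ge> 0" "A \<noteq> {} \<or> g > 0" for A g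
    using that assms(6) pos by (intro snr_cdf_prod_has_sum) (auto intro: finite_subset)
  have "distributed M lborel (\<lambda>\<omega>. Max ((\<lambda>k. ?Y k \<omega>) ` {..<K}))
          (\<lambda>g. ennreal (if 0 < g
             then \<Sum>j<K. snr_pdf (a j) (b j) (PL j) gbar g * (\<Prod>k\<in>{..<K} - {j}. ?F k g)
             else 0))"
    using assms(6) pos nonempty marginal Y_nonneg
    by (intro distributed_Max_indep[OF indep])
       (auto intro: snr_cdf_has_real_derivative snr_pdf_nonneg continuous_on_snr_cdf
                    borel_measurable_snr_cdf borel_measurable_snr_pdf)
  moreover have "(\<Sum>\<^sub>\<infinity>n\<in>PiE ({..<K} - {j}) (\<lambda>_. UNIV).
                  (\<Prod>k\<in>{..<K} - {j}. ser_coeff (a k) (b k) (PL k) gbar (n k))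
                  * g powr ((\<Sum>k\<in>{..<K} - {j}. a k + real (n k)) / 2)) = (\<Prod>k\<in>{..<K} - {j}. ?F k g)"
    if "g > 0" for g j
    using series[of "{..<K} - {j}" g] that by (auto intro: infsumI)
  ultimately show ?thesis
    using series[of "{..<K}"] nonempty prob_Max_le_indep[OF indep] marginal
    by (simp add: snr_pdf_def cong: if_cong)
qed

end
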